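(* Let $\Gamma$ and $\Gamma'$ be triangulations of connected closed $2$-dimensional surfaces $M$ and $M'$, and let $\tau,\tau'$ be $z$-orientations of $\Gamma,\Gamma'$ respectively such that all faces of $(\Gamma,\tau)$ and of $(\Gamma',\tau')$ are of type II. Then for any face $F$ of $\Gamma$, any face $F'$ of $\Gamma'$ and every special homeomorphism $g:\partial F\to\partial F'$, there exists a $z$-orientation of the connected sum $\Gamma\#_g\Gamma'$ for which all faces are of type II.
   Context: A triangulation of a connected closed surface (not necessarily orientable) is a closed $2$-cell embedding of a connected finite simple graph all of whose faces are triangles. Two edges are adjacent if distinct and in a common face; two faces are adjacent if distinct and their intersection is an edge. A zigzag is a sequence of edges $(e_i)_{i\in\mathbb{N}}$ such that for every $i$: $e_i,e_{i+1}$ are adjacent, the faces containing $e_i,e_{i+1}$ and $e_{i+1},e_{i+2}$ are adjacent, and $e_i,e_{i+2}$ are disjoint; it is a cyclic sequence, equivalently a cyclic vertex sequence $v_1,\dots,v_n$ with $e_i=v_iv_{i+1}$, traversing $e_i$ from $v_i$ to $v_{i+1}$. A $z$-orientation $\tau$ is a set of zigzags containing exactly one of $Z,Z^{-1}$ (reversed zigzag) for every zigzag $Z$. Every edge is traversed exactly twice in total by zigzags of $\tau$; it is of type I if in opposite directions, of type II if in the same direction. A face is of type II if all three of its edges are of type II (they then form a directed cycle); otherwise (two type I edges and one type II edge) it is of type I. A homeomorphism $g:\partial F\to\partial F'$ between boundaries of faces is special if it maps vertices to vertices. The connected sum $\Gamma\#_g\Gamma'$ is the triangulation of $M\# M'$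 obtained by removing the interiors of $F$ and $F'$ and gluing $\partial F$ to $\partial F'$ via $g$. *)

theory Defs
  imports Main
begin

text \<open>Combinatorial model of a triangulation of a connected closed surface:
  a finite set of faces, each face being the 3-element set of its vertices.\<close>

definition tri_edges :: "'v set set \<Rightarrow> 'v set set" where
  "tri_edges T = {e. card e = 2 \<and> (\<exists>F\<in>T. e \<subseteq> F)}"

definition tri_vertices :: "'v set set \<Rightarrow> 'v set" where
  "tri_vertices T = \<Union>T"

definition link_rel :: "'v set set \<Rightarrow> 'v \<Rightarrow> ('v \<times> 'v) set" where
  "link_rel T v = {(x, y). {v, x, y} \<in> T}"

definition neighbours :: "'v set set \<Rightarrow> 'v \<Rightarrow> 'v set" where
  "neighbours T v = {x. {v, x} \<in> tri_edges T}"

definition edge_rel :: "'v set set \<Rightarrow> ('v \<times> 'v) set" where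
  "edge_rel T = {(x, y). {x, y} \<in> tri_edges T}"

definition triangulation :: "'v set set \<Rightarrow> bool" where
  "triangulation T \<longleftrightarrow>
     finite T \<and> T \<noteq> {} \<and>
     (\<forall>F\<in>T. card F = 3) \<and>
     (\<forall>e\<in>tri_edges T. card {F\<in>T. e \<subseteq> F} = 2) \<and>
     (\<forall>v\<in>tri_vertices T. \<forall>x\<in>neighbours T v. \<forall>y\<in>neighbours T v.
         (x, y) \<in> (link_rel T v)\<^sup>*) \<and>
     (\<forall>x\<in>tri_vertices T. \<forall>y\<in>tri_vertices T. (x, y) \<in> (edge_rel T)\<^sup>*)"

definition adjacent_faces :: "'v set set \<Rightarrow> 'v set \<Rightarrow> 'v set \<Rightarrow> bool" where
  "adjacent_faces T F G \<longleftrightarrow> F \<in> T \<and> G \<in> T \<and> F \<noteq> G \<and> F \<inter> G \<in> tri_edges T"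

definition zigzag_seq :: "'v set set \<Rightarrow> (nat \<Rightarrow> 'v) \<Rightarrow> bool" where
  "zigzag_seq T s \<longleftrightarrow>
     (let e = (\<lambda>i. {s i, s (Suc i)}) in
      \<forall>i. e i \<in> tri_edges T \<and> e i \<noteq> e (Suc i) \<and>
          (\<exists>F G. F \<in> T \<and> G \<in> T \<and> e i \<union> e (Suc i) \<subseteq> F \<and>
                 e (Suc i) \<union> e (Suc (Suc i)) \<subseteq> G \<and> adjacent_faces T F G) \<and>
          e i \<inter> e (Suc (Suc i)) = {})"

text \<open>The (cyclic) zigzag is identified with the set of its consecutive vertex triples
  (invariant under shifting; each position in a period gives a distinct triple).\<close>
definition zigzag_of :: "(nat \<Rightarrow> 'v) \<Rightarrow> ('v \<times> 'v \<times> 'v) set" where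
  "zigzag_of s = {(s i, s (Suc i), s (Suc (Suc i))) | i. True}"

definition zigzags :: "'v set set \<Rightarrow> ('v \<times> 'v \<times> 'v) set set" where
  "zigzags T = {zigzag_of s | s. zigzag_seq T s}"

definition rev_zigzag :: "('v \<times> 'v \<times> 'v) set \<Rightarrow> ('v \<times> 'v \<times> 'v) set" where
  "rev_zigzag Z = (\<lambda>(a, b, c). (c, b, a)) ` Z"

definition z_orientation :: "'v set set \<Rightarrow> ('v \<times> 'v \<times> 'v) set set \<Rightarrow> bool" where
  "z_orientation T \<tau> \<longleftrightarrow> \<tau> \<subseteq> zigzags T \<and>
     (\<forall>Z\<in>zigzags T. (Z \<in> \<tau> \<or> rev_zigzag Z \<in> \<tau>) \<and>
                     (Z \<in> \<tau> \<and> rev_zigzag Z \<in> \<tau> \<longrightarrow> Z = rev_zigzag Z))"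

definition dir_count :: "('v \<times> 'v \<times> 'v) set set \<Rightarrow> 'v \<Rightarrow> 'v \<Rightarrow> nat" where
  "dir_count \<tau> u w = (\<Sum>Z\<in>\<tau>. card {t \<in> Z. fst t = u \<and> fst (snd t) = w})"

definition edge_type_II :: "('v \<times> 'v \<times> 'v) set set \<Rightarrow> 'v \<Rightarrow> 'v \<Rightarrow> bool" where
  "edge_type_II \<tau> u w \<longleftrightarrow>
     (dir_count \<tau> u w = 2 \<and> dir_count \<tau> w u = 0) \<or>
     (dir_count \<tau> w u = 2 \<and> dir_count \<tau> u w = 0)"

definition face_type_II :: "('v \<times> 'v \<times> 'v) set set \<Rightarrow> 'v set \<Rightarrow> bool" where
  "face_type_II \<tau> F \<longleftrightarrow> (\<forall>u\<in>F. \<forall>w\<in>F. u \<noteq> w \<longrightarrow> edge_type_II \<tau> u w)"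

definition all_faces_type_II :: "'v set set \<Rightarrow> ('v \<times> 'v \<times> 'v) set set \<Rightarrow> bool" where
  "all_faces_type_II T \<tau> \<longleftrightarrow> (\<forall>F\<in>T. face_type_II \<tau> F)"

text \<open>Connected sum along faces F, F' via the vertex bijection g : F \<rightarrow> F'
  (a special homeomorphism of the boundaries is determined, up to isotopy, by it).\<close>
definition glue_map :: "'a set \<Rightarrow> ('a \<Rightarrow> 'b) \<Rightarrow> 'b set \<Rightarrow> 'b \<Rightarrow> 'a + 'b" where
  "glue_map F g F' y = (if y \<in> F' then Inl (the_inv_into F g y) else Inr y)"

definition conn_sum :: "'a set set \<Rightarrow> 'b set set \<Rightarrow> 'a set \<Rightarrow> 'b set \<Rightarrow> ('a \<Rightarrow> 'b)
    \<Rightarrow> ('a + 'b) set set" where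
  "conn_sum T T' F F' g =
     (\<lambda>G. Inl ` G) ` (T - {F}) \<union> (\<lambda>G. glue_map F g F' ` G) ` (T' - {F'})"

end

theory Submission
  imports Defs "HOL-Combinatorics.Orbits"
begin

text \<open>
  If all faces of (\<Gamma>, \<tau>) are of type II, the directions in which the zigzags of \<tau> traverse
  the edges form a relation D in which every face is a directed 3-cycle: each edge of a face is
  traversed in one direction only, and no vertex of a face is a source, because the zigzag
  through (x, y, z) or its reverse belongs to \<tau>.

  Conversely, given such a D, take the zigzags all of whose edges follow D. Zigzags are the
  orbits of the permutation (a, b, c) \<mapsto> (b, c, d) of flags, {b, c, d} being the other face on bc.
  Since a \<rightarrow> b \<rightarrow> c in the cycle on {a, b, c}, a zigzag follows D as soon as its first edge
  does, and otherwise its reverse does. Every arc u \<rightarrow> w of D begins exactly two flags, one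
  for each face on uw, so it is traversed twice and in one direction: all faces are of type II.

  A triangle has only two cyclic orientations, so after possibly reversing D' the relations D
  and D' induce the same orientation of the face along which F and F' are glued, and their
  union makes every face of the connected sum a directed 3-cycle.
\<close>

definition directed_3cycle :: "('v \<times> 'v) set \<Rightarrow> 'v set \<Rightarrow> bool" where
  "directed_3cycle D K \<longleftrightarrow>
     (\<exists>a b c. distinct [a, b, c] \<and> K = {a, b, c} \<and> Restr D K - Id = {(a, b), (b, c), (c, a)})"

definition cyclic_edge_orientation :: "'v set set \<Rightarrow> ('v \<times> 'v) set \<Rightarrow> bool" where
  "cyclic_edge_orientation S D \<longleftrightarrow> (\<forall>K\<in>S. directed_3cycle D K)"

lemma directed_3cycle_arcs:
  assumes "directed_3cycle D {a, b, c}" and "a \<noteq> b" and "(a, b) \<in> D"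
  shows "Restr D {a, b, c} - Id = {(a, b), (b, c), (c, a)}"
proof -
  obtain p q r where pqr: "distinct [p, q, r]" "{a, b, c} = {p, q, r}"
    and D: "Restr D {a, b, c} - Id = {(p, q), (q, r), (r, p)}"
    using assms(1) unfolding directed_3cycle_def by (elim exE conjE)
  have "(a, b) \<in> Restr D {a, b, c} - Id"
    using assms(2,3) by simp
  then consider "(a, b) = (p, q)" | "(a, b) = (q, r)" | "(a, b) = (r, p)"
    unfolding D by blast
  then have "(a, b, c) \<in> {(p, q, r), (q, r, p), (r, p, q)}"
  proof cases
    case 1
    then have "r \<in> {a, b, c}" "r \<noteq> a" "r \<noteq> b" using pqr by auto
    then show ?thesis using 1 by auto
  next
    case 2
    then have "p \<in> {a, b, c}" "p \<noteq> a" "p \<noteq> b" using pqr by auto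
    then show ?thesis using 2 by auto
  next
    case 3
    then have "q \<in> {a, b, c}" "q \<noteq> a" "q \<noteq> b" using pqr by auto
    then show ?thesis using 3 by auto
  qed
  then show ?thesis
    using pqr(1) unfolding D by (auto simp: insert_commute)
qed

lemma directed_3cycle_next:
  assumes "directed_3cycle D {a, b, c}" and "a \<noteq> b" and "(a, b) \<in> D"
  shows "(b, c) \<in> D"
  using directed_3cycle_arcs[OF assms] by blast

lemma directed_3cycle_asym:
  assumes "directed_3cycle D K" and "x \<in> K" and "y \<in> K" and "x \<noteq> y"
  shows "(x, y) \<in> D \<longleftrightarrow> (y, x) \<notin> D"
proof -
  obtain a b c where abc: "distinct [a, b, c]" "K = {a, b, c}"
    and D: "Restr D K - Id = {(a, b), (b, c), (c, a)}"
    using assms(1) unfolding directed_3cycle_def by (elim exE conjE)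
  have "(x, y) \<in> D \<longleftrightarrow> (x, y) \<in> Restr D K - Id" "(y, x) \<in> D \<longleftrightarrow> (y, x) \<in> Restr D K - Id"
    using assms(2-4) by auto
  then show ?thesis
    unfolding D using abc assms(2-4) by auto
qed

lemma Restr_converse_Diff_Id: "Restr (D\<inverse>) K - Id = (Restr D K - Id)\<inverse>"
  by blast

lemma directed_3cycle_converse:
  assumes "directed_3cycle D K"
  shows "directed_3cycle (D\<inverse>) K"
proof -
  obtain a b c where abc: "distinct [a, b, c]" "K = {a, b, c}"
    and D: "Restr D K - Id = {(a, b), (b, c), (c, a)}"
    using assms unfolding directed_3cycle_def by (elim exE conjE)
  have "Restr (D\<inverse>) K - Id = {(c, b), (b, a), (a, c)}"
    unfolding Restr_converse_Diff_Id D by auto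
  moreover have "distinct [c, b, a]" "K = {c, b, a}"
    using abc by auto
  ultimately show ?thesis
    unfolding directed_3cycle_def by blast
qed

lemma directed_3cycle_cong:
  assumes "Restr D K - Id = Restr E K - Id"
  shows "directed_3cycle D K \<longleftrightarrow> directed_3cycle E K"
  unfolding directed_3cycle_def assms ..

lemma directed_3cycle_agree_or_opposite:
  assumes D: "directed_3cycle D K" and E: "directed_3cycle E K"
  shows "Restr D K - Id = Restr E K - Id \<or> Restr D K - Id = Restr (E\<inverse>) K - Id"
proof -
  obtain a b c where abc: "distinct [a, b, c]" and K: "K = {a, b, c}"
    and D_arcs: "Restr D K - Id = {(a, b), (b, c), (c, a)}"
    using D unfolding directed_3cycle_def by (elim exE conjE)
  have K': "K = {b, a, c}"
    unfolding K by (rule insert_commute)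
  have "a \<noteq> b" "a \<in> K" "b \<in> K"
    using abc unfolding K by simp_all
  then consider "(a, b) \<in> E" | "(b, a) \<in> E"
    using directed_3cycle_asym[OF E] by blast
  then show ?thesis
  proof cases
    case 1
    have "Restr E K - Id = {(a, b), (b, c), (c, a)}"
      using directed_3cycle_arcs[OF E[unfolded K] \<open>a \<noteq> b\<close> 1] unfolding K .
    then show ?thesis
      using D_arcs by simp
  next
    case 2
    have "Restr E K - Id = {(b, a), (a, c), (c, b)}"
      using directed_3cycle_arcs[OF E[unfolded K'] \<open>a \<noteq> b\<close>[symmetric] 2] unfolding K' .
    then have "Restr (E\<inverse>) K - Id = {(a, b), (b, c), (c, a)}"
      unfolding Restr_converse_Diff_Id by auto
    then show ?thesis
      using D_arcs by simp
  qed
qed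

lemma directed_3cycleI:
  assumes "card K = 3"
    and tournament: "\<And>x y. x \<in> K \<Longrightarrow> y \<in> K \<Longrightarrow> x \<noteq> y \<Longrightarrow> (x, y) \<in> D \<longleftrightarrow> (y, x) \<notin> D"
    and entered: "\<And>y. y \<in> K \<Longrightarrow> \<exists>x\<in>K. x \<noteq> y \<and> (x, y) \<in> D"
  shows "directed_3cycle D K"
proof -
  have cycle: "directed_3cycle D K"
    if abc: "distinct [a, b, c]" "K = {a, b, c}" and ab: "(a, b) \<in> D" for a b c
  proof -
    have ba: "(b, a) \<notin> D"
      using tournament[of a b] abc ab by auto
    then have ca: "(c, a) \<in> D"
      using entered[of a] abc by auto
    then have ac: "(a, c) \<notin> D"
      using tournament[of a c] abc by auto
    then have bc: "(b, c) \<in> D"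
      using entered[of c] abc by auto
    then have cb: "(c, b) \<notin> D"
      using tournament[of b c] abc by auto
    have "Restr D K - Id = {(a, b), (b, c), (c, a)}"
      unfolding abc(2) using abc(1) ab ba ca ac bc cb by (auto simp del: insert_Times_insert)
    then show ?thesis
      using abc unfolding directed_3cycle_def by blast
  qed
  obtain a b c where abc: "distinct [a, b, c]" "K = {a, b, c}"
    using assms(1) by (auto simp: card_3_iff)
  show ?thesis
  proof (cases "(a, b) \<in> D")
    case True
    then show ?thesis using cycle abc by blast
  next
    case False
    then have "(b, a) \<in> D"
      using tournament[of a b] abc by auto
    moreover have "distinct [b, a, c]" "K = {b, a, c}"
      using abc by auto
    ultimately show ?thesis using cycle by blast
  qed
qed

lemma Restr_map_prod_image_Diff_Id:
  assumes "inj f"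
  shows "Restr (map_prod f f ` D) (f ` K) - Id = map_prod f f ` (Restr D K - Id)"
proof (intro equalityI subsetI)
  fix p assume "p \<in> Restr (map_prod f f ` D) (f ` K) - Id"
  then obtain x y where "p = (f x, f y)" "(x, y) \<in> D" "f x \<in> f ` K" "f y \<in> f ` K" "x \<noteq> y"
    by auto
  then show "p \<in> map_prod f f ` (Restr D K - Id)"
    using inj_image_mem_iff[OF assms] by (auto simp: inj_eq[OF assms])
qed (auto simp: inj_eq[OF assms])

lemma directed_3cycle_image:
  assumes "inj f" and "directed_3cycle D K"
  shows "directed_3cycle (map_prod f f ` D) (f ` K)"
proof -
  obtain a b c where abc: "distinct [a, b, c]" "K = {a, b, c}"
    and D: "Restr D K - Id = {(a, b), (b, c), (c, a)}"
    using assms(2) unfolding directed_3cycle_def by (elim exE conjE)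
  have "Restr (map_prod f f ` D) (f ` K) - Id = {(f a, f b), (f b, f c), (f c, f a)}"
    unfolding Restr_map_prod_image_Diff_Id[OF assms(1)] D by simp
  moreover have "distinct [f a, f b, f c]"
    using abc(1) assms(1) by (simp add: inj_eq)
  moreover have "f ` K = {f a, f b, f c}"
    unfolding abc(2) by simp
  ultimately show ?thesis
    unfolding directed_3cycle_def by blast
qed

lemma cyclic_edge_orientation_converse:
  "cyclic_edge_orientation S D \<Longrightarrow> cyclic_edge_orientation S (D\<inverse>)"
  unfolding cyclic_edge_orientation_def by (blast intro: directed_3cycle_converse)

lemma cyclic_edge_orientation_image:
  "inj f \<Longrightarrow> cyclic_edge_orientation S D \<Longrightarrow>
    cyclic_edge_orientation ((`) f ` S) (map_prod f f ` D)"
  unfolding cyclic_edge_orientation_def by (blast intro: directed_3cycle_image)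

lemma directed_3cycle_Un:
  assumes "directed_3cycle D K" and "K \<subseteq> X" and "E \<subseteq> Y \<times> Y" and "Restr E (X \<inter> Y) - Id \<subseteq> D"
  shows "directed_3cycle (D \<union> E) K"
proof -
  have "Restr (D \<union> E) K - Id = Restr D K - Id"
    using assms(2-4) by blast
  then show ?thesis
    using assms(1) by (subst directed_3cycle_cong)
qed

lemma cyclic_edge_orientation_Un:
  assumes D: "cyclic_edge_orientation S D" and E: "cyclic_edge_orientation S' E"
    and "D \<subseteq> X \<times> X" and "E \<subseteq> Y \<times> Y" and "\<forall>K\<in>S. K \<subseteq> X" and "\<forall>K\<in>S'. K \<subseteq> Y"
    and agree: "Restr D (X \<inter> Y) - Id = Restr E (X \<inter> Y) - Id"
  shows "cyclic_edge_orientation (S \<union> S') (D \<union> E)"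
  unfolding cyclic_edge_orientation_def
proof
  fix K assume "K \<in> S \<union> S'"
  then show "directed_3cycle (D \<union> E) K"
  proof
    assume K: "K \<in> S"
    have "directed_3cycle D K" "K \<subseteq> X"
      using D K assms(5) unfolding cyclic_edge_orientation_def by blast+
    moreover have "Restr E (X \<inter> Y) - Id \<subseteq> D"
      unfolding agree[symmetric] by (rule subset_trans[OF Diff_subset Int_lower1])
    ultimately show ?thesis
      using assms(4) by (intro directed_3cycle_Un)
  next
    assume K: "K \<in> S'"
    have "directed_3cycle E K" "K \<subseteq> Y"
      using E K assms(6) unfolding cyclic_edge_orientation_def by blast+
    moreover have "Restr D (Y \<inter> X) - Id \<subseteq> E"
      unfolding Int_commute[of Y X] agree by (rule subset_trans[OF Diff_subset Int_lower1])
    ultimately have "directed_3cycle (E \<union> D) K"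
      using assms(3) by (intro directed_3cycle_Un)
    then show ?thesis
      by (simp only: Un_commute)
  qed
qed

lemma dir_count_eq_card_Union:
  assumes "finite \<tau>" and "\<And>Z. Z \<in> \<tau> \<Longrightarrow> finite Z" and "pairwise disjnt \<tau>"
  shows "dir_count \<tau> u w = card {t \<in> \<Union>\<tau>. fst t = u \<and> fst (snd t) = w}"
proof -
  let ?P = "\<lambda>Z. {t \<in> Z. fst t = u \<and> fst (snd t) = w}"
  have "dir_count \<tau> u w = card (\<Union>Z\<in>\<tau>. ?P Z)"
    unfolding dir_count_def using assms
    by (intro card_UN_disjoint[symmetric]) (auto simp: pairwise_def disjnt_def)
  also have "(\<Union>Z\<in>\<tau>. ?P Z) = {t \<in> \<Union>\<tau>. fst t = u \<and> fst (snd t) = w}"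
    by blast
  finally show ?thesis .
qed

lemma dir_count_pos:
  assumes "finite \<tau>" and "Z \<in> \<tau>" and "finite Z" and "(u, w, x) \<in> Z"
  shows "dir_count \<tau> u w \<noteq> 0"
proof -
  have "card {t \<in> Z. fst t = u \<and> fst (snd t) = w} \<noteq> 0"
    using assms(3,4) by (auto simp: card_eq_0_iff)
  then show ?thesis
    unfolding dir_count_def using assms(1,2) by auto
qed

definition triple_at :: "(nat \<Rightarrow> 'v) \<Rightarrow> nat \<Rightarrow> 'v \<times> 'v \<times> 'v" where
  "triple_at s i = (s i, s (Suc i), s (Suc (Suc i)))"

lemma zigzag_of_eq_range: "zigzag_of s = range (triple_at s)"
  unfolding zigzag_of_def triple_at_def by blast

locale closed_pseudosurface =
  fixes T :: "'v set set"
  assumes finite_faces: "finite T"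
    and card_face: "K \<in> T \<Longrightarrow> card K = 3"
    and card_faces_containing_edge: "e \<in> tri_edges T \<Longrightarrow> card {K \<in> T. e \<subseteq> K} = 2"
begin

lemma finite_face: "K \<in> T \<Longrightarrow> finite K"
  using card_face by (metis card.infinite zero_neq_numeral)

lemma face_distinct: "{a, b, c} \<in> T \<Longrightarrow> distinct [a, b, c]"
  using card_face[of "{a, b, c}"] by (auto simp: card_insert_if split: if_splits)

lemma face_subset_eq: "K \<in> T \<Longrightarrow> L \<in> T \<Longrightarrow> K \<subseteq> L \<Longrightarrow> K = L"
  using card_subset_eq finite_face card_face by metis

lemma face_eq_if_subset:
  assumes "K \<in> T" and "{a, b, c} \<subseteq> K" and "distinct [a, b, c]"
  shows "K = {a, b, c}"
  using card_subset_eq[OF finite_face[OF assms(1)] assms(2)] card_face[OF assms(1)] assms(3)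
  by simp

lemma face_third_vertex:
  assumes "K \<in> T" and "u \<in> K" and "w \<in> K" and "u \<noteq> w"
  obtains x where "K = {u, w, x}"
proof -
  have "\<not> K \<subseteq> {u, w}"
    using card_mono[of "{u, w}" K] card_face[OF assms(1)] by (cases "u = w") auto
  then obtain x where "x \<in> K" "x \<notin> {u, w}"
    by blast
  then have "K = {u, w, x}"
    using face_eq_if_subset[OF assms(1), of u w x] assms(2-4) by auto
  then show thesis ..
qed

lemma edge_of_face: "{a, b, c} \<in> T \<Longrightarrow> {a, b} \<in> tri_edges T"
  using face_distinct[of a b c] unfolding tri_edges_def by auto

lemma card_faces_containing_edge_Diff:
  assumes "F \<in> T" and "e \<in> tri_edges T"
  shows "card {K \<in> T - {F}. e \<subseteq> K} = (if e \<subseteq> F then 1 else 2)"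
proof -
  have "{K \<in> T - {F}. e \<subseteq> K} = {K \<in> T. e \<subseteq> K} - {F}"
    by blast
  then show ?thesis
    using card_faces_containing_edge[OF assms(2)] assms(1) finite_faces
    by (simp add: card_Diff_singleton_if)
qed

lemma ex1_other_apex:
  assumes abc: "{a, b, c} \<in> T"
  shows "\<exists>!x. {a, b, x} \<in> T \<and> x \<noteq> c"
proof -
  let ?C = "{K \<in> T. {a, b} \<subseteq> K}"
  have "distinct [a, b, c]"
    using face_distinct[OF abc] .
  have "card ?C = 2"
    using card_faces_containing_edge[OF edge_of_face[OF abc]] .
  moreover have "{a, b, c} \<in> ?C"
    using abc by simp
  ultimately have "card (?C - {{a, b, c}}) = 1"
    by simp
  then obtain M where M: "?C - {{a, b, c}} = {M}"
    by (rule card_1_singletonE)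
  then have "M \<in> T" "a \<in> M" "b \<in> M"
    by auto
  then obtain x where x: "M = {a, b, x}"
    using face_third_vertex \<open>distinct [a, b, c]\<close> by (metis distinct_length_2_or_more)
  have "y = x" if y: "{a, b, y} \<in> T" "y \<noteq> c" for y
  proof -
    have "y \<noteq> a" "y \<noteq> b"
      using face_distinct[OF y(1)] by auto
    then have "{a, b, y} \<noteq> {a, b, c}"
      using y(2) \<open>distinct [a, b, c]\<close> by auto
    then have "{a, b, y} \<in> ?C - {{a, b, c}}"
      using y(1) by simp
    then have "{a, b, y} = {a, b, x}"
      unfolding M x by simp
    then show "y = x"
      using \<open>y \<noteq> a\<close> \<open>y \<noteq> b\<close> by auto
  qed
  moreover have "{a, b, x} \<in> T" "x \<noteq> c"
    using M x by auto
  ultimately show ?thesis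
    by blast
qed

definition other_apex :: "'v \<Rightarrow> 'v \<Rightarrow> 'v \<Rightarrow> 'v" where
  "other_apex a b c = (THE x. {a, b, x} \<in> T \<and> x \<noteq> c)"

lemma other_apex:
  assumes "{a, b, c} \<in> T"
  shows "{a, b, other_apex a b c} \<in> T" and "other_apex a b c \<noteq> c"
  using theI'[OF ex1_other_apex[OF assms]] unfolding other_apex_def by auto

lemma other_apex_eqI:
  assumes "{a, b, c} \<in> T" and "{a, b, x} \<in> T" and "x \<noteq> c"
  shows "other_apex a b c = x"
  unfolding other_apex_def using the1_equality[OF ex1_other_apex[OF assms(1)]] assms by blast

lemma other_apex_other_apex:
  "{a, b, c} \<in> T \<Longrightarrow> other_apex a b (other_apex a b c) = c"
  using other_apex_eqI[OF other_apex(1)] other_apex(2) by metis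

lemma other_apex_commute: "other_apex b a c = other_apex a b c"
  unfolding other_apex_def by (simp add: insert_commute)

definition flags :: "('v \<times> 'v \<times> 'v) set" where
  "flags = {(a, b, c). {a, b, c} \<in> T}"

lemma mem_flags [simp]: "(a, b, c) \<in> flags \<longleftrightarrow> {a, b, c} \<in> T"
  by (simp add: flags_def)

lemma finite_flags: "finite flags"
proof -
  have "flags \<subseteq> \<Union>T \<times> \<Union>T \<times> \<Union>T"
    by auto
  moreover have "finite (\<Union>T)"
    using finite_faces finite_face by blast
  ultimately show ?thesis
    by (meson finite_SigmaI finite_subset)
qed

text \<open>Extended by the identity outside the flags, so that it is a permutation.\<close>
definition zigzag_step :: "'v \<times> 'v \<times> 'v \<Rightarrow> 'v \<times> 'v \<times> 'v" where
  "zigzag_step t = (if t \<in> flags then case t of (a, b, c) \<Rightarrow> (b, c, other_apex b c a) else t)"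

lemma zigzag_step_flag [simp]:
  "{a, b, c} \<in> T \<Longrightarrow> zigzag_step (a, b, c) = (b, c, other_apex b c a)"
  by (simp add: zigzag_step_def)

lemma zigzag_step_in_flags: "t \<in> flags \<Longrightarrow> zigzag_step t \<in> flags"
proof (cases t)
  case (fields a b c)
  assume "t \<in> flags"
  then have "{b, c, a} \<in> T"
    using fields by (simp add: insert_commute)
  then show ?thesis
    using fields other_apex(1)[of b c a] by (simp add: insert_commute)
qed

lemma zigzag_step_permutes: "zigzag_step permutes flags"
proof -
  have inj: "inj_on zigzag_step flags"
  proof (rule inj_onI)
    fix s t assume "s \<in> flags" "t \<in> flags" and eq: "zigzag_step s = zigzag_step t"
    obtain a b c a' b' c' where s: "s = (a, b, c)" and t: "t = (a', b', c')"
      by (cases s, cases t)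
    have abc: "{a, b, c} \<in> T" and abc': "{a', b', c'} \<in> T"
      using \<open>s \<in> flags\<close> \<open>t \<in> flags\<close> unfolding s t by simp_all
    have "(b, c, other_apex b c a) = (b', c', other_apex b' c' a')"
      using eq unfolding s t zigzag_step_flag[OF abc] zigzag_step_flag[OF abc'] .
    then have "b' = b" "c' = c" "other_apex b c a = other_apex b' c' a'"
      by (metis prod.inject)+
    moreover have "{b, c, a} \<in> T" "{b, c, a'} \<in> T"
      using abc abc' \<open>b' = b\<close> \<open>c' = c\<close>
      by (simp_all add: insert_commute)
    ultimately show "s = t"
      unfolding s t using other_apex_other_apex by (metis (no_types))
  qed
  have "zigzag_step ` flags = flags"
    using endo_inj_surj[OF finite_flags _ inj] zigzag_step_in_flags by blast
  then show ?thesis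
    using inj by (intro bij_imp_permutes) (auto simp: bij_betw_def zigzag_step_def)
qed

lemma permutation_zigzag_step: "permutation zigzag_step"
  using zigzag_step_permutes finite_flags permutation_permutes by blast

lemma orbit_zigzag_step: "orbit zigzag_step t = range (\<lambda>n. (zigzag_step ^^ n) t)"
  unfolding orbit_altdef_permutation[OF permutation_zigzag_step] by blast

lemma funpow_zigzag_step_in_flags: "t \<in> flags \<Longrightarrow> (zigzag_step ^^ n) t \<in> flags"
  by (induction n) (simp_all add: zigzag_step_in_flags)

definition zigzag_turn :: "'v \<Rightarrow> 'v \<Rightarrow> 'v \<Rightarrow> 'v \<Rightarrow> bool" where
  "zigzag_turn a b c d \<longleftrightarrow> {a, b} \<in> tri_edges T \<and> {a, b} \<noteq> {b, c} \<and>
     (\<exists>F G. F \<in> T \<and> G \<in> T \<and> {a, b} \<union> {b, c} \<subseteq> F \<and> {b, c} \<union> {c, d} \<subseteq> G \<and>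
            adjacent_faces T F G) \<and>
     {a, b} \<inter> {c, d} = {}"

lemma zigzag_seq_iff_turn:
  "zigzag_seq T s \<longleftrightarrow> (\<forall>i. zigzag_turn (s i) (s (Suc i)) (s (Suc (Suc i))) (s (Suc (Suc (Suc i)))))"
  unfolding zigzag_seq_def zigzag_turn_def Let_def ..

lemma zigzag_step_if_turn:
  assumes "zigzag_turn a b c d" and "{c, d} \<in> tri_edges T"
  shows "{a, b, c} \<in> T" and "zigzag_step (a, b, c) = (b, c, d)"
proof -
  obtain F G where ab: "{a, b} \<in> tri_edges T" and "{a, b} \<noteq> {b, c}"
    and F: "F \<in> T" "{a, b} \<union> {b, c} \<subseteq> F" and G: "G \<in> T" "{b, c} \<union> {c, d} \<subseteq> G"
    and "adjacent_faces T F G" and disj: "{a, b} \<inter> {c, d} = {}"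
    using assms(1) unfolding zigzag_turn_def by (elim conjE exE) (rule that; assumption)
  have "a \<noteq> b" "c \<noteq> d"
    using ab assms(2) unfolding tri_edges_def by auto
  moreover have "a \<noteq> c" "b \<noteq> c" "a \<noteq> d" "b \<noteq> d"
    using \<open>{a, b} \<noteq> {b, c}\<close> disj by auto
  ultimately have F_eq: "F = {a, b, c}" and G_eq: "G = {b, c, d}"
    using face_eq_if_subset[OF F(1), of a b c] face_eq_if_subset[OF G(1), of b c d] F(2) G(2)
    by simp_all
  show abc: "{a, b, c} \<in> T"
    using F(1) unfolding F_eq .
  have bca: "{b, c, a} \<in> T"
    using abc by (simp add: insert_commute)
  have bcd: "{b, c, d} \<in> T"
    using G(1) unfolding G_eq .
  have "F \<noteq> G"
    using \<open>adjacent_faces T F G\<close> unfolding adjacent_faces_def by blast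
  then have "d \<noteq> a"
    unfolding F_eq G_eq by (auto simp: insert_commute)
  with bca bcd have "other_apex b c a = d"
    by (rule other_apex_eqI)
  then show "zigzag_step (a, b, c) = (b, c, d)"
    using abc by simp
qed

lemma zigzag_turn_if_step:
  assumes abc: "{a, b, c} \<in> T" and step: "zigzag_step (a, b, c) = (b, c, d)"
  shows "zigzag_turn a b c d"
proof -
  have d: "d = other_apex b c a"
    using step unfolding zigzag_step_flag[OF abc] by simp
  have bca: "{b, c, a} \<in> T"
    using abc by (simp add: insert_commute)
  have bcd: "{b, c, d} \<in> T" and "d \<noteq> a"
    using other_apex[OF bca] unfolding d by simp_all
  have "distinct [a, b, c]" "distinct [b, c, d]"
    using face_distinct abc bcd by blast+
  then have "{a, b, c} \<inter> {b, c, d} = {b, c}" "{a, b, c} \<noteq> {b, c, d}"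
    using \<open>d \<noteq> a\<close> by auto
  then have "adjacent_faces T {a, b, c} {b, c, d}"
    unfolding adjacent_faces_def using abc bcd edge_of_face[OF bca] by simp
  then show ?thesis
    unfolding zigzag_turn_def
    using edge_of_face[OF abc] abc bcd \<open>distinct [a, b, c]\<close> \<open>distinct [b, c, d]\<close> \<open>d \<noteq> a\<close>
    by (intro conjI exI[of _ "{a, b, c}"] exI[of _ "{b, c, d}"]) auto
qed

lemma zigzag_seq_iff:
  "zigzag_seq T s \<longleftrightarrow>
     (\<forall>i. triple_at s i \<in> flags \<and> zigzag_step (triple_at s i) = triple_at s (Suc i))"
proof
  assume "zigzag_seq T s"
  then have turn: "zigzag_turn (s i) (s (Suc i)) (s (Suc (Suc i))) (s (Suc (Suc (Suc i))))" for i
    unfolding zigzag_seq_iff_turn by blast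
  have "{s (Suc (Suc i)), s (Suc (Suc (Suc i)))} \<in> tri_edges T" for i
    using turn[of "Suc (Suc i)"] unfolding zigzag_turn_def by blast
  then show "\<forall>i. triple_at s i \<in> flags \<and> zigzag_step (triple_at s i) = triple_at s (Suc i)"
    unfolding triple_at_def mem_flags using zigzag_step_if_turn[OF turn] by blast
next
  assume step: "\<forall>i. triple_at s i \<in> flags \<and> zigzag_step (triple_at s i) = triple_at s (Suc i)"
  show "zigzag_seq T s"
    unfolding zigzag_seq_iff_turn
  proof
    fix i
    show "zigzag_turn (s i) (s (Suc i)) (s (Suc (Suc i))) (s (Suc (Suc (Suc i))))"
      using step[rule_format, of i] zigzag_turn_if_step unfolding triple_at_def mem_flags by blast
  qed
qed

lemma zigzag_step_shift:
  assumes "t \<in> flags"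
  shows "fst (zigzag_step t) = fst (snd t)" and "fst (snd (zigzag_step t)) = snd (snd t)"
  using assms by (cases t; simp)+

lemma zigzags_eq_orbits: "zigzags T = orbit zigzag_step ` flags"
proof (intro equalityI subsetI)
  fix Z assume "Z \<in> zigzags T"
  then obtain s where s: "zigzag_seq T s" and Z: "Z = zigzag_of s"
    unfolding zigzags_def by blast
  have step: "zigzag_step (triple_at s n) = triple_at s (Suc n)" and flag: "triple_at s n \<in> flags" for n
    using s unfolding zigzag_seq_iff by simp_all
  have "triple_at s n = (zigzag_step ^^ n) (triple_at s 0)" for n
    by (induction n) (simp_all flip: step)
  then have "triple_at s = (\<lambda>n. (zigzag_step ^^ n) (triple_at s 0))"
    by (rule ext)
  then have "Z = orbit zigzag_step (triple_at s 0)"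
    unfolding Z zigzag_of_eq_range orbit_zigzag_step by (rule arg_cong[where f = range])
  then show "Z \<in> orbit zigzag_step ` flags"
    using flag[of 0] by blast
next
  fix Z assume "Z \<in> orbit zigzag_step ` flags"
  then obtain t where t: "t \<in> flags" and Z: "Z = orbit zigzag_step t"
    by blast
  define s where "s n = fst ((zigzag_step ^^ n) t)" for n
  have triple: "triple_at s n = (zigzag_step ^^ n) t" for n
    using funpow_zigzag_step_in_flags[OF t, of n] funpow_zigzag_step_in_flags[OF t, of "Suc n"]
    by (simp add: triple_at_def s_def zigzag_step_shift)
  then have "zigzag_seq T s"
    unfolding zigzag_seq_iff using funpow_zigzag_step_in_flags[OF t] by simp
  moreover have "Z = zigzag_of s"
  proof -
    have "triple_at s = (\<lambda>n. (zigzag_step ^^ n) t)"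
      using triple by (rule ext)
    then show ?thesis
      unfolding Z zigzag_of_eq_range orbit_zigzag_step by (rule arg_cong[where f = range, symmetric])
  qed
  ultimately show "Z \<in> zigzags T"
    unfolding zigzags_def by blast
qed

lemma zigzag_subset_flags: "Z \<in> zigzags T \<Longrightarrow> Z \<subseteq> flags"
  unfolding zigzags_eq_orbits using permutes_orbit_subset[OF zigzag_step_permutes] by blast

lemma finite_zigzags: "finite (zigzags T)"
  unfolding zigzags_eq_orbits using finite_flags by simp

lemma finite_zigzag: "Z \<in> zigzags T \<Longrightarrow> finite Z"
  using zigzag_subset_flags finite_flags finite_subset by blast

lemma orbit_zigzag_step_eq: "x \<in> orbit zigzag_step t \<Longrightarrow> orbit zigzag_step x = orbit zigzag_step t"
  by (rule orbit_cyclic_eq3[OF cyclic_on_orbit'[OF permutation_zigzag_step]])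

lemma zigzags_disjoint: "pairwise disjnt (zigzags T)"
proof (rule pairwiseI)
  fix Z Z' assume "Z \<in> zigzags T" "Z' \<in> zigzags T" "Z \<noteq> Z'"
  then obtain t t' where Z: "Z = orbit zigzag_step t" and Z': "Z' = orbit zigzag_step t'"
    unfolding zigzags_eq_orbits by blast
  show "disjnt Z Z'"
    unfolding disjnt_iff
  proof (intro allI notI)
    fix x assume "x \<in> Z \<and> x \<in> Z'"
    then have "Z = Z'"
      unfolding Z Z' using orbit_zigzag_step_eq by metis
    then show False
      using \<open>Z \<noteq> Z'\<close> by contradiction
  qed
qed

lemma rev_zigzag_orbit:
  assumes "{a, b, c} \<in> T"
  shows "rev_zigzag (orbit zigzag_step (a, b, c)) = orbit zigzag_step (c, b, a)"
proof -
  let ?r = "\<lambda>(x :: 'v, y :: 'v, z :: 'v). (z, y, x)"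
  have inj: "inj zigzag_step"
    using permutation_zigzag_step by (simp add: permutation_bijective bij_is_inj)
  \<comment> \<open>Reversal conjugates the zigzag step into its inverse.\<close>
  have "inv zigzag_step (?r t) = ?r (zigzag_step t)" if "t \<in> flags" for t
  proof -
    obtain x y z where t: "t = (x, y, z)" "{y, z, x} \<in> T"
      using \<open>t \<in> flags\<close> by (cases t) (simp add: insert_commute)
    let ?w = "other_apex y z x"
    have "{z, y, ?w} \<in> T"
      using other_apex(1)[OF t(2)] by (simp add: insert_commute)
    then have "zigzag_step (?r (zigzag_step t)) = (z, y, other_apex z y ?w)"
      using t by (simp add: insert_commute)
    also have "other_apex z y ?w = x"
      using other_apex_other_apex[OF t(2)] by (simp add: other_apex_commute)
    finally show ?thesis
      using t by (simp add: inv_f_eq[OF inj])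
  qed
  moreover have "orbit zigzag_step (a, b, c) \<subseteq> flags"
    using permutes_orbit_subset[OF zigzag_step_permutes] assms by simp
  ultimately have "?r ` orbit zigzag_step (a, b, c) = orbit (inv zigzag_step) (?r (a, b, c))"
    by (intro orbit_inverse permutation_self_in_orbit[OF permutation_zigzag_step]) blast
  then show ?thesis
    unfolding rev_zigzag_def orbit_inv_eq[OF permutation_zigzag_step] by simp
qed

definition following_zigzags :: "('v \<times> 'v) set \<Rightarrow> ('v \<times> 'v \<times> 'v) set set" where
  "following_zigzags D = {Z \<in> zigzags T. \<forall>(a, b, c)\<in>Z. (a, b) \<in> D}"

lemma orbit_in_following_zigzags:
  assumes D: "cyclic_edge_orientation T D" and "{a, b, c} \<in> T" and "(a, b) \<in> D"
  shows "orbit zigzag_step (a, b, c) \<in> following_zigzags D"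
proof -
  let ?follows = "\<lambda>t. t \<in> flags \<and> (fst t, fst (snd t)) \<in> D"
  have step: "?follows (zigzag_step t)" if "?follows t" for t
  proof -
    obtain x y z where t: "t = (x, y, z)"
      by (cases t)
    have xyz: "{x, y, z} \<in> T" and xy: "(x, y) \<in> D"
      using that unfolding t by simp_all
    have "directed_3cycle D {x, y, z}" and "x \<noteq> y"
      using D xyz face_distinct[OF xyz] unfolding cyclic_edge_orientation_def by auto
    then have "(y, z) \<in> D"
      using xy by (rule directed_3cycle_next)
    then show ?thesis
      using xyz zigzag_step_in_flags[of t] unfolding t by simp
  qed
  have "?follows t" if "t \<in> orbit zigzag_step (a, b, c)" for t
    using that by induction (use assms(2,3) step in auto)
  then show ?thesis
    unfolding following_zigzags_def zigzags_eq_orbits using assms(2) by fastforce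
qed

lemma Union_following_zigzags:
  assumes "cyclic_edge_orientation T D"
  shows "\<Union>(following_zigzags D) = {t \<in> flags. (fst t, fst (snd t)) \<in> D}"
proof (intro equalityI subsetI)
  fix t assume "t \<in> \<Union>(following_zigzags D)"
  then show "t \<in> {t \<in> flags. (fst t, fst (snd t)) \<in> D}"
    unfolding following_zigzags_def using zigzag_subset_flags by fastforce
next
  fix t assume "t \<in> {t \<in> flags. (fst t, fst (snd t)) \<in> D}"
  moreover have "t \<in> orbit zigzag_step t"
    using permutation_self_in_orbit[OF permutation_zigzag_step] .
  ultimately show "t \<in> \<Union>(following_zigzags D)"
    using orbit_in_following_zigzags[OF assms] by (cases t) auto
qed

lemma card_flags_on_edge:
  assumes "{u, w} \<in> tri_edges T"
  shows "card {t \<in> flags. fst t = u \<and> fst (snd t) = w} = 2"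
proof -
  let ?X = "{x. {u, w, x} \<in> T}"
  have "u \<noteq> w"
    using assms unfolding tri_edges_def by auto
  have flags_eq: "{t \<in> flags. fst t = u \<and> fst (snd t) = w} = (\<lambda>x. (u, w, x)) ` ?X"
    by auto
  have inj_X: "inj_on (\<lambda>x. {u, w, x}) ?X"
  proof (rule inj_onI)
    fix x y assume "x \<in> ?X" "y \<in> ?X" "{u, w, x} = {u, w, y}"
    moreover have "x \<notin> {u, w}" "y \<notin> {u, w}"
      using face_distinct \<open>x \<in> ?X\<close> \<open>y \<in> ?X\<close> by auto
    ultimately show "x = y"
      by auto
  qed
  have X: "(\<lambda>x. {u, w, x}) ` ?X = {K \<in> T. {u, w} \<subseteq> K}"
  proof (intro equalityI subsetI)
    fix K assume "K \<in> {K \<in> T. {u, w} \<subseteq> K}"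
    then obtain x where "K = {u, w, x}"
      using face_third_vertex \<open>u \<noteq> w\<close> by (metis CollectD insert_subset)
    then show "K \<in> (\<lambda>x. {u, w, x}) ` ?X"
      using \<open>K \<in> {K \<in> T. {u, w} \<subseteq> K}\<close> by auto
  qed auto
  have "card ?X = 2"
    using card_faces_containing_edge[OF assms] card_image[OF inj_X, unfolded X] by simp
  then show ?thesis
    unfolding flags_eq by (simp add: card_image inj_on_def)
qed

lemma dir_count_following_zigzags:
  assumes D: "cyclic_edge_orientation T D" and "{u, w} \<in> tri_edges T"
  shows "dir_count (following_zigzags D) u w = (if (u, w) \<in> D then 2 else 0)"
proof -
  have "following_zigzags D \<subseteq> zigzags T"
    unfolding following_zigzags_def by blast
  then have "dir_count (following_zigzags D) u w
      = card {t \<in> \<Union>(following_zigzags D). fst t = u \<and> fst (snd t) = w}"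
    using finite_zigzags finite_zigzag zigzags_disjoint
    by (intro dir_count_eq_card_Union) (auto intro: finite_subset pairwise_subset)
  also have "{t \<in> \<Union>(following_zigzags D). fst t = u \<and> fst (snd t) = w}
      = (if (u, w) \<in> D then {t \<in> flags. fst t = u \<and> fst (snd t) = w} else {})"
    unfolding Union_following_zigzags[OF D] by auto
  finally show ?thesis
    using card_flags_on_edge[OF assms(2)] by simp
qed

lemma following_zigzag_or_reverse:
  assumes D: "cyclic_edge_orientation T D" and "{a, b, c} \<in> T"
  shows "orbit zigzag_step (a, b, c) \<in> following_zigzags D \<or>
    orbit zigzag_step (c, b, a) \<in> following_zigzags D"
proof (cases "(a, b) \<in> D")
  case True
  then show ?thesis
    using orbit_in_following_zigzags[OF D \<open>{a, b, c} \<in> T\<close>] by blast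
next
  case False
  have "distinct [a, b, c]" and K: "directed_3cycle D {a, b, c}"
    using face_distinct D assms(2) unfolding cyclic_edge_orientation_def by auto
  then have "(b, a) \<in> D"
    using directed_3cycle_asym[OF K, of a b] False by auto
  moreover have "directed_3cycle D {b, a, c}" "directed_3cycle D {a, c, b}" "b \<noteq> a" "a \<noteq> c"
    using K \<open>distinct [a, b, c]\<close> by (auto simp: insert_commute)
  ultimately have "(c, b) \<in> D"
    using directed_3cycle_next by metis
  moreover have "{c, b, a} \<in> T"
    using assms(2) by (simp add: insert_commute)
  ultimately show ?thesis
    using orbit_in_following_zigzags[OF D] by blast
qed

lemma not_following_zigzag_and_reverse:
  assumes D: "cyclic_edge_orientation T D" and "{a, b, c} \<in> T"
    and "orbit zigzag_step (a, b, c) \<in> following_zigzags D"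
  shows "orbit zigzag_step (c, b, a) \<notin> following_zigzags D"
proof
  assume "orbit zigzag_step (c, b, a) \<in> following_zigzags D"
  moreover have "(c, b, a) \<in> orbit zigzag_step (c, b, a)"
    by (rule permutation_self_in_orbit[OF permutation_zigzag_step])
  moreover have "(b, c, other_apex b c a) \<in> orbit zigzag_step (a, b, c)"
    using orbit.base[of zigzag_step "(a, b, c)"] assms(2) by simp
  ultimately have "(c, b) \<in> D" "(b, c) \<in> D"
    using assms(3) unfolding following_zigzags_def by fast+
  moreover have "distinct [a, b, c]" and "directed_3cycle D {a, b, c}"
    using face_distinct D assms(2) unfolding cyclic_edge_orientation_def by auto
  ultimately show False
    using directed_3cycle_asym[of D "{a, b, c}" b c] by auto
qed

lemma z_orientation_following_zigzags:
  assumes D: "cyclic_edge_orientation T D"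
  shows "z_orientation T (following_zigzags D)"
proof -
  have "(Z \<in> following_zigzags D \<or> rev_zigzag Z \<in> following_zigzags D) \<and>
        \<not> (Z \<in> following_zigzags D \<and> rev_zigzag Z \<in> following_zigzags D)"
    if "Z \<in> zigzags T" for Z
  proof -
    obtain a b c where abc: "{a, b, c} \<in> T" and Z: "Z = orbit zigzag_step (a, b, c)"
      using \<open>Z \<in> zigzags T\<close> unfolding zigzags_eq_orbits by auto
    show ?thesis
      unfolding Z rev_zigzag_orbit[OF abc]
      using following_zigzag_or_reverse[OF D abc] not_following_zigzag_and_reverse[OF D abc] by blast
  qed
  then show ?thesis
    unfolding z_orientation_def following_zigzags_def by blast
qed

lemma all_faces_type_II_following_zigzags:
  assumes D: "cyclic_edge_orientation T D"
  shows "all_faces_type_II T (following_zigzags D)"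
  unfolding all_faces_type_II_def face_type_II_def
proof (intro ballI impI)
  fix K u w assume K: "K \<in> T" "u \<in> K" "w \<in> K" "u \<noteq> w"
  have K_cycle: "directed_3cycle D K"
    using D K(1) unfolding cyclic_edge_orientation_def by blast
  obtain x where "K = {u, w, x}"
    using K by (rule face_third_vertex)
  then have "{u, w} \<in> tri_edges T"
    using K(1) edge_of_face by simp
  moreover have "{w, u} = {u, w}"
    by (rule insert_commute)
  moreover have "(u, w) \<in> D \<longleftrightarrow> (w, u) \<notin> D"
    by (rule directed_3cycle_asym[OF K_cycle K(2-4)])
  ultimately show "edge_type_II (following_zigzags D) u w"
    unfolding edge_type_II_def using dir_count_following_zigzags[OF D] by auto
qed

lemma z_orientation_enters_vertex:
  assumes \<tau>: "z_orientation T \<tau>" and K: "K \<in> T" and "y \<in> K"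
  shows "\<exists>x\<in>K. x \<noteq> y \<and> dir_count \<tau> x y \<noteq> 0"
proof -
  have "\<tau> \<subseteq> zigzags T"
    using \<tau> unfolding z_orientation_def by blast
  then have fin: "finite \<tau>" "\<And>Z. Z \<in> \<tau> \<Longrightarrow> finite Z"
    using finite_zigzags finite_zigzag finite_subset by blast+
  have "K \<noteq> {y}"
    using card_face[OF K] by auto
  then obtain x where "x \<in> K" "x \<noteq> y"
    using \<open>y \<in> K\<close> by blast
  then obtain z where xyz: "K = {x, y, z}"
    using face_third_vertex[OF K] \<open>y \<in> K\<close> by metis
  have "distinct [x, y, z]"
    using face_distinct K xyz by blast
  let ?Z = "orbit zigzag_step (x, y, z)"
  have "?Z \<in> zigzags T"
    unfolding zigzags_eq_orbits using K xyz by auto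
  then have "?Z \<in> \<tau> \<or> rev_zigzag ?Z \<in> \<tau>"
    using \<tau> unfolding z_orientation_def by blast
  moreover have "(x, y, z) \<in> ?Z" "(z, y, x) \<in> rev_zigzag ?Z"
    using permutation_self_in_orbit[OF permutation_zigzag_step, of "(x, y, z)"]
    unfolding rev_zigzag_def by force+
  ultimately have "dir_count \<tau> x y \<noteq> 0 \<or> dir_count \<tau> z y \<noteq> 0"
    using dir_count_pos fin by metis
  then show ?thesis
    using xyz \<open>distinct [x, y, z]\<close> by auto
qed

lemma cyclic_edge_orientation_type_II_arcs:
  assumes \<tau>: "z_orientation T \<tau>" and type_II: "all_faces_type_II T \<tau>"
  shows "cyclic_edge_orientation T {(u, w). dir_count \<tau> u w = 2 \<and> dir_count \<tau> w u = 0}"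
    (is "cyclic_edge_orientation T ?D")
  unfolding cyclic_edge_orientation_def
proof
  fix K assume K: "K \<in> T"
  have edge_II: "edge_type_II \<tau> u w" if "u \<in> K" "w \<in> K" "u \<noteq> w" for u w
    using type_II K that unfolding all_faces_type_II_def face_type_II_def by blast
  show "directed_3cycle ?D K"
  proof (rule directed_3cycleI)
    show "card K = 3"
      using card_face[OF K] .
    show "(x, y) \<in> ?D \<longleftrightarrow> (y, x) \<notin> ?D" if "x \<in> K" "y \<in> K" "x \<noteq> y" for x y
      using edge_II[OF that] unfolding edge_type_II_def by auto
    show "\<exists>x\<in>K. x \<noteq> y \<and> (x, y) \<in> ?D" if "y \<in> K" for y
      using z_orientation_enters_vertex[OF \<tau> K that] edge_II that unfolding edge_type_II_def
      by fastforce
  qed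
qed

theorem type_II_z_orientation_iff:
  "(\<exists>\<tau>. z_orientation T \<tau> \<and> all_faces_type_II T \<tau>) \<longleftrightarrow> (\<exists>D. cyclic_edge_orientation T D)"
  using cyclic_edge_orientation_type_II_arcs z_orientation_following_zigzags
    all_faces_type_II_following_zigzags by blast

end

definition glue_faces ::
    "'v set set \<Rightarrow> 'w set set \<Rightarrow> 'v set \<Rightarrow> 'w set \<Rightarrow> ('v \<Rightarrow> 'u) \<Rightarrow> ('w \<Rightarrow> 'u) \<Rightarrow> 'u set set"
  where "glue_faces S1 S2 F1 F2 f1 f2 = (`) f1 ` (S1 - {F1}) \<union> (`) f2 ` (S2 - {F2})"

lemma vimage_subset_if_subset_image: "inj f \<Longrightarrow> e \<subseteq> f ` A \<Longrightarrow> f -` e \<subseteq> A"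
  by (auto dest: injD)

lemma card_faces_containing_image:
  assumes "inj f"
  shows "card {K \<in> (`) f ` S. e \<subseteq> K} = (if e \<subseteq> range f then card {G \<in> S. f -` e \<subseteq> G} else 0)"
proof (cases "e \<subseteq> range f")
  case True
  have "{K \<in> (`) f ` S. e \<subseteq> K} = (`) f ` {G \<in> S. f -` e \<subseteq> G}"
  proof (intro equalityI subsetI)
    fix K assume "K \<in> {K \<in> (`) f ` S. e \<subseteq> K}"
    then obtain G where G: "G \<in> S" "K = f ` G" "e \<subseteq> f ` G"
      by blast
    then have "f -` e \<subseteq> G"
      using vimage_subset_if_subset_image[OF assms] by blast
    then show "K \<in> (`) f ` {G \<in> S. f -` e \<subseteq> G}"
      using G by blast
  next
    fix K assume "K \<in> (`) f ` {G \<in> S. f -` e \<subseteq> G}"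
    then obtain G where G: "G \<in> S" "K = f ` G" "f -` e \<subseteq> G"
      by blast
    then have "e \<subseteq> f ` G"
      using True by blast
    then show "K \<in> {K \<in> (`) f ` S. e \<subseteq> K}"
      using G by blast
  qed
  moreover have "inj_on ((`) f) {G \<in> S. f -` e \<subseteq> G}"
    using assms by (simp add: inj_on_def inj_image_eq_iff)
  ultimately show ?thesis
    using True by (simp add: card_image)
next
  case False
  then have "{K \<in> (`) f ` S. e \<subseteq> K} = {}"
    by blast
  then have "card {K \<in> (`) f ` S. e \<subseteq> K} = 0"
    by (simp only: card.empty)
  with False show ?thesis
    by simp
qed

locale face_gluing = S1: closed_pseudosurface S1 + S2: closed_pseudosurface S2
  for S1 :: "'v set set" and S2 :: "'w set set" +
  fixes F1 :: "'v set" and F2 :: "'w set" and f1 :: "'v \<Rightarrow> 'u" and f2 :: "'w \<Rightarrow> 'u"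
  assumes F1: "F1 \<in> S1" and F2: "F2 \<in> S2" and inj1: "inj f1" and inj2: "inj f2"
    and overlap1: "range f1 \<inter> range f2 = f1 ` F1" and overlap2: "range f1 \<inter> range f2 = f2 ` F2"
begin

lemma swapped: "face_gluing S2 S1 F2 F1 f2 f1"
proof (rule face_gluing.intro[OF S2.closed_pseudosurface_axioms S1.closed_pseudosurface_axioms])
  show "face_gluing_axioms S2 S1 F2 F1 f2 f1"
    using F1 F2 inj1 inj2 overlap1 overlap2 by unfold_locales (simp_all add: Int_commute)
qed

lemma vimage_edge_left:
  assumes "K \<in> glue_faces S1 S2 F1 F2 f1 f2" and "e \<subseteq> K" and "card e = 2" and "e \<subseteq> range f1"
  shows "f1 -` e \<in> tri_edges S1"
proof -
  from assms(1) consider G where "G \<in> S1" "K = f1 ` G" | G where "G \<in> S2" "K = f2 ` G"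
    unfolding glue_faces_def by blast
  then have "\<exists>G\<in>S1. f1 -` e \<subseteq> G"
  proof cases
    case 1
    then have "f1 -` e \<subseteq> G"
      using assms(2) vimage_subset_if_subset_image[OF inj1] by blast
    then show ?thesis
      using 1(1) by blast
  next
    case 2
    then have "e \<subseteq> f1 ` F1"
      using assms(2,4) overlap1 by blast
    then show ?thesis
      using F1 vimage_subset_if_subset_image[OF inj1] by blast
  qed
  moreover have "card (f1 -` e) = 2"
    using card_vimage_inj[OF inj1 assms(4)] assms(3) by simp
  ultimately show ?thesis
    unfolding tri_edges_def by blast
qed

lemma card_left_faces_containing_edge:
  assumes "K \<in> glue_faces S1 S2 F1 F2 f1 f2" and "e \<subseteq> K" and "card e = 2"
  shows "card {L \<in> (`) f1 ` (S1 - {F1}). e \<subseteq> L}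
    = (if e \<subseteq> range f1 then if e \<subseteq> range f2 then 1 else 2 else 0)"
proof (cases "e \<subseteq> range f1")
  case True
  have "f1 -` e \<subseteq> F1 \<longleftrightarrow> e \<subseteq> f1 ` F1"
    using True vimage_subset_if_subset_image[OF inj1] by blast
  also have "\<dots> \<longleftrightarrow> e \<subseteq> range f2"
    using True overlap1 by blast
  finally show ?thesis
    using True card_faces_containing_image[OF inj1]
      S1.card_faces_containing_edge_Diff[OF F1 vimage_edge_left[OF assms True]]
    by simp
next
  case False
  then show ?thesis
    using card_faces_containing_image[OF inj1] by simp
qed

lemma sides_disjoint: "(`) f1 ` (S1 - {F1}) \<inter> (`) f2 ` (S2 - {F2}) = {}"
proof -
  have False if "G \<in> S1 - {F1}" and "f1 ` G = f2 ` G'" for G G'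
  proof -
    have "f1 ` G \<subseteq> f1 ` F1"
      using that(2) overlap1 by blast
    then have "G \<subseteq> F1"
      using inj1 by (simp add: inj_image_subset_iff)
    then show False
      using S1.face_subset_eq[of G F1] F1 that(1) by blast
  qed
  then show ?thesis
    by blast
qed

lemma closed_pseudosurface_glued: "closed_pseudosurface (glue_faces S1 S2 F1 F2 f1 f2)"
proof
  show "finite (glue_faces S1 S2 F1 F2 f1 f2)"
    unfolding glue_faces_def using S1.finite_faces S2.finite_faces by simp
next
  fix K assume "K \<in> glue_faces S1 S2 F1 F2 f1 f2"
  then consider G where "G \<in> S1" "K = f1 ` G" | G where "G \<in> S2" "K = f2 ` G"
    unfolding glue_faces_def by blast
  then show "card K = 3"
    by cases (simp_all add: card_image[OF inj_on_subset[OF inj1 subset_UNIV]]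
        card_image[OF inj_on_subset[OF inj2 subset_UNIV]] S1.card_face S2.card_face)
next
  fix e assume "e \<in> tri_edges (glue_faces S1 S2 F1 F2 f1 f2)"
  then obtain K where K: "K \<in> glue_faces S1 S2 F1 F2 f1 f2" "e \<subseteq> K" and "card e = 2"
    unfolding tri_edges_def by blast
  interpret swapped: face_gluing S2 S1 F2 F1 f2 f1
    by (rule swapped)
  have K': "K \<in> glue_faces S2 S1 F2 F1 f2 f1"
    using K(1) unfolding glue_faces_def by blast
  have "{L \<in> glue_faces S1 S2 F1 F2 f1 f2. e \<subseteq> L}
      = {L \<in> (`) f1 ` (S1 - {F1}). e \<subseteq> L} \<union> {L \<in> (`) f2 ` (S2 - {F2}). e \<subseteq> L}"
    unfolding glue_faces_def by blast
  moreover have "finite ((`) f1 ` (S1 - {F1}))" "finite ((`) f2 ` (S2 - {F2}))"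
    using S1.finite_faces S2.finite_faces by simp_all
  ultimately have "card {L \<in> glue_faces S1 S2 F1 F2 f1 f2. e \<subseteq> L}
      = card {L \<in> (`) f1 ` (S1 - {F1}). e \<subseteq> L} + card {L \<in> (`) f2 ` (S2 - {F2}). e \<subseteq> L}"
    using sides_disjoint by (simp add: card_Un_disjoint disjoint_iff)
  moreover have "e \<subseteq> range f1 \<or> e \<subseteq> range f2"
    using K unfolding glue_faces_def by blast
  ultimately show "card {L \<in> glue_faces S1 S2 F1 F2 f1 f2. e \<subseteq> L} = 2"
    using card_left_faces_containing_edge[OF K \<open>card e = 2\<close>]
      swapped.card_left_faces_containing_edge[OF K' K(2) \<open>card e = 2\<close>]
    by auto
qed

lemma cyclic_edge_orientation_glued:
  assumes D1: "cyclic_edge_orientation S1 D1" and D2: "cyclic_edge_orientation S2 D2"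
  shows "\<exists>D. cyclic_edge_orientation (glue_faces S1 S2 F1 F2 f1 f2) D"
proof -
  let ?C = "f1 ` F1" and ?E1 = "map_prod f1 f1 ` D1"
  have E1: "directed_3cycle ?E1 ?C"
    using directed_3cycle_image[OF inj1] D1 F1 unfolding cyclic_edge_orientation_def by blast
  obtain D2' where D2': "cyclic_edge_orientation S2 D2'"
    and agree: "Restr ?E1 ?C - Id = Restr (map_prod f2 f2 ` D2') ?C - Id"
  proof -
    have "directed_3cycle (map_prod f2 f2 ` D2) (f2 ` F2)"
      using directed_3cycle_image[OF inj2] D2 F2 unfolding cyclic_edge_orientation_def by blast
    then have E2: "directed_3cycle (map_prod f2 f2 ` D2) ?C"
      using overlap1 overlap2 by simp
    have "map_prod f2 f2 ` (D2\<inverse>) = (map_prod f2 f2 ` D2)\<inverse>"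
      by auto
    then show thesis
      using directed_3cycle_agree_or_opposite[OF E1 E2] that D2
        that[OF cyclic_edge_orientation_converse[OF D2]]
      by metis
  qed
  have "cyclic_edge_orientation ((`) f1 ` (S1 - {F1}) \<union> (`) f2 ` (S2 - {F2})) (?E1 \<union> map_prod f2 f2 ` D2')"
  proof (rule cyclic_edge_orientation_Un)
    show "cyclic_edge_orientation ((`) f1 ` (S1 - {F1})) ?E1"
      using cyclic_edge_orientation_image[OF inj1 D1] unfolding cyclic_edge_orientation_def by blast
    show "cyclic_edge_orientation ((`) f2 ` (S2 - {F2})) (map_prod f2 f2 ` D2')"
      using cyclic_edge_orientation_image[OF inj2 D2'] unfolding cyclic_edge_orientation_def by blast
    show "Restr ?E1 (range f1 \<inter> range f2) - Id = Restr (map_prod f2 f2 ` D2') (range f1 \<inter> range f2) - Id"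
      unfolding overlap1 by (rule agree)
  qed auto
  then show ?thesis
    unfolding glue_faces_def by blast
qed

end

lemma
  assumes "bij_betw g F F'"
  shows inj_glue_map: "inj (glue_map F g F')"
    and glue_map_image: "glue_map F g F' ` F' = Inl ` F"
    and range_Inl_Int_range_glue_map: "range Inl \<inter> range (glue_map F g F') = Inl ` F"
proof -
  have inv: "bij_betw (the_inv_into F g) F' F"
    by (rule bij_betw_the_inv_into[OF assms])
  show "inj (glue_map F g F')"
    using bij_betw_imp_inj_on[OF inv] unfolding glue_map_def inj_def inj_on_def by auto
  show image: "glue_map F g F' ` F' = Inl ` F"
    using bij_betw_imp_surj_on[OF inv] unfolding glue_map_def by auto
  have "Inl x \<in> range (glue_map F g F') \<Longrightarrow> Inl x \<in> glue_map F g F' ` F'" for x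
    unfolding glue_map_def by (auto split: if_splits)
  then have "range Inl \<inter> range (glue_map F g F') \<subseteq> Inl ` F"
    using image by blast
  moreover have "Inl ` F \<subseteq> range Inl \<inter> range (glue_map F g F')"
    using image by blast
  ultimately show "range Inl \<inter> range (glue_map F g F') = Inl ` F"
    by (rule subset_antisym)
qed

lemma closed_pseudosurface_triangulation: "triangulation T \<Longrightarrow> closed_pseudosurface T"
  unfolding triangulation_def by unfold_locales auto

theorem lemma2:
  fixes T :: "'a set set" and T' :: "'b set set"
    and \<tau> :: "('a \<times> 'a \<times> 'a) set set" and \<tau>' :: "('b \<times> 'b \<times> 'b) set set"
  assumes "triangulation T" and "triangulation T'"
    and "z_orientation T \<tau>" and "z_orientation T' \<tau>'"
    and "all_faces_type_II T \<tau>" and "all_faces_type_II T' \<tau>'"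
    and "F \<in> T" and "F' \<in> T'" and "bij_betw g F F'"
  shows "\<exists>\<sigma>. z_orientation (conn_sum T T' F F' g) \<sigma> \<and>
              all_faces_type_II (conn_sum T T' F F' g) \<sigma>"
proof -
  interpret T: closed_pseudosurface T
    using assms(1) by (rule closed_pseudosurface_triangulation)
  interpret T': closed_pseudosurface T'
    using assms(2) by (rule closed_pseudosurface_triangulation)
  interpret G: face_gluing T T' F F' Inl "glue_map F g F'"
    using assms(7,8) inj_glue_map[OF assms(9)] glue_map_image[OF assms(9)]
      range_Inl_Int_range_glue_map[OF assms(9)]
    by unfold_locales simp_all
  have conn_sum: "conn_sum T T' F F' g = glue_faces T T' F F' Inl (glue_map F g F')"
    unfolding conn_sum_def glue_faces_def ..
  obtain D where "cyclic_edge_orientation T D"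
    using T.type_II_z_orientation_iff assms(3,5) by blast
  moreover obtain D' where "cyclic_edge_orientation T' D'"
    using T'.type_II_z_orientation_iff assms(4,6) by blast
  ultimately have "\<exists>E. cyclic_edge_orientation (conn_sum T T' F F' g) E"
    unfolding conn_sum by (rule G.cyclic_edge_orientation_glued)
  then show ?thesis
    using closed_pseudosurface.type_II_z_orientation_iff[OF G.closed_pseudosurface_glued]
    unfolding conn_sum by blast
qed

end
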